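(* Let $G=(V,E)$ be a graph whose vertex set is partitioned into three (possibly empty) cliques $Q_1,Q_2,Q_3$ such that: (a) for all $i\neq j$, each vertex of $Q_i$ is adjacent to at most one vertex of $Q_j$; (b) for distinct $i,j,k$, if a vertex of $Q_i$ is adjacent to $b\in Q_j$ and to $c\in Q_k$, then $bc\in E$; (c) for each $i\in\{1,2,3\}$ there is a finite set of colours $L_i$ such that (i) every vertex $v\in Q_i$ has list $L(v)=L_i$, (ii) $|L_i|\ge |Q_i|$, (iii) there are colours $d_1\in L_1$, $d_2\in L_2$, $d_3\in L_3$ that are pairwise distinct, and (iv) no colour belongs to all three of $L_1,L_2,L_3$. Then $G$ admits an $L$-colouring, i.e., a proper vertex colouring in which every vertex $v$ receives a colour from $L(v)$. *)

theory Defs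
  imports Main
begin

definition simple_graph :: "'v set \<Rightarrow> ('v \<Rightarrow> 'v \<Rightarrow> bool) \<Rightarrow> bool" where
  "simple_graph V E \<longleftrightarrow> finite V \<and> (\<forall>u v. E u v \<longrightarrow> E v u) \<and> (\<forall>v. \<not> E v v)
     \<and> (\<forall>u v. E u v \<longrightarrow> u \<in> V \<and> v \<in> V)"

definition is_clique :: "'v set \<Rightarrow> ('v \<Rightarrow> 'v \<Rightarrow> bool) \<Rightarrow> 'v set \<Rightarrow> bool" where
  "is_clique V E Q \<longleftrightarrow> Q \<subseteq> V \<and> (\<forall>x\<in>Q. \<forall>y\<in>Q. x \<noteq> y \<longrightarrow> E x y)"

definition is_L_colouring :: "'v set \<Rightarrow> ('v \<Rightarrow> 'v \<Rightarrow> bool) \<Rightarrow> ('v \<Rightarrow> 'c set) \<Rightarrow> ('v \<Rightarrow> 'c) \<Rightarrow> bool" where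
  "is_L_colouring V E Lst col \<longleftrightarrow> (\<forall>v\<in>V. col v \<in> Lst v)
     \<and> (\<forall>u\<in>V. \<forall>v\<in>V. E u v \<longrightarrow> col u \<noteq> col v)"

end

theory Submission
  imports Defs
begin

text \<open>Induction on the number of vertices. Pick a vertex \<open>v\<close> and let \<open>K\<close> consist of \<open>v\<close> and its
  neighbours in the other two cliques. By (a) \<open>K\<close> meets every clique at most once, and by (b) every
  edge leaving \<open>K\<close> stays inside a clique. Give the vertex of \<open>K\<close> in \<open>Q\<^sub>j\<close> a colour
  \<open>c\<^sub>j \<in> L\<^sub>j\<close>, these colours pairwise distinct, and delete \<open>c\<^sub>j\<close> from \<open>L\<^sub>j\<close> and \<open>K\<close>
  from the graph: each clique losing a vertex loses exactly one colour, so \<open>|L\<^sub>j| \<ge> |Q\<^sub>j|\<close>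
  survives, and a colouring of the rest extends by the \<open>c\<^sub>j\<close>. The delicate hypothesis is (iii):
  a clique that keeps vertices needs a new representative different from \<open>c\<^sub>j\<close>. Both are taken
  from \<open>{d\<^sub>j, e\<^sub>j}\<close> for a second colour \<open>e\<^sub>j \<in> L\<^sub>j\<close>; deciding which goes where is a
  finite choice, and it succeeds because no colour lies in all three lists.\<close>

definition clique_triple :: "('v \<Rightarrow> 'v \<Rightarrow> bool) \<Rightarrow> (nat \<Rightarrow> 'v set) \<Rightarrow> bool" where
  "clique_triple E Q \<longleftrightarrow>
     (\<forall>i\<in>{1,2,3}. finite (Q i))
   \<and> (\<forall>i\<in>{1,2,3}. \<forall>j\<in>{1,2,3}. i \<noteq> j \<longrightarrow> Q i \<inter> Q j = {})
   \<and> (\<forall>i\<in>{1,2,3}. \<forall>x\<in>Q i. \<forall>y\<in>Q i. x \<noteq> y \<longrightarrow> E x y)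
   \<and> (\<forall>i\<in>{1,2,3}. \<forall>j\<in>{1,2,3}. i \<noteq> j \<longrightarrow>
        (\<forall>v\<in>Q i. \<forall>b\<in>Q j. \<forall>c\<in>Q j. E v b \<and> E v c \<longrightarrow> b = c))
   \<and> (\<forall>i\<in>{1,2,3}. \<forall>j\<in>{1,2,3}. \<forall>k\<in>{1,2,3}. i \<noteq> j \<and> j \<noteq> k \<and> i \<noteq> k \<longrightarrow>
        (\<forall>v\<in>Q i. \<forall>b\<in>Q j. \<forall>c\<in>Q k. E v b \<and> E v c \<longrightarrow> E b c))"

text \<open>The distinct representatives \<open>d i\<close> are only required for nonempty cliques: removing
  vertices may empty a clique, and then its representative can no longer be kept.\<close>
definition admissible_lists :: "(nat \<Rightarrow> 'v set) \<Rightarrow> (nat \<Rightarrow> 'c set) \<Rightarrow> (nat \<Rightarrow> 'c) \<Rightarrow> bool" where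
  "admissible_lists Q L d \<longleftrightarrow>
     (\<forall>i\<in>{1,2,3}. finite (L i) \<and> card (Q i) \<le> card (L i))
   \<and> (\<forall>i\<in>{1,2,3}. Q i \<noteq> {} \<longrightarrow> d i \<in> L i)
   \<and> (\<forall>i\<in>{1,2,3}. \<forall>j\<in>{1,2,3}. i \<noteq> j \<and> Q i \<noteq> {} \<and> Q j \<noteq> {} \<longrightarrow> d i \<noteq> d j)
   \<and> L 1 \<inter> L 2 \<inter> L 3 = {}"

definition triple_colouring ::
    "('v \<Rightarrow> 'v \<Rightarrow> bool) \<Rightarrow> (nat \<Rightarrow> 'v set) \<Rightarrow> (nat \<Rightarrow> 'c set) \<Rightarrow> ('v \<Rightarrow> 'c) \<Rightarrow> bool" where
  "triple_colouring E Q L col \<longleftrightarrow>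
     (\<forall>i\<in>{1,2,3}. \<forall>v\<in>Q i. col v \<in> L i)
   \<and> (\<forall>i\<in>{1,2,3}. \<forall>j\<in>{1,2,3}. \<forall>u\<in>Q i. \<forall>v\<in>Q j. E u v \<longrightarrow> col u \<noteq> col v)"

definition transversal :: "('v \<Rightarrow> 'v \<Rightarrow> bool) \<Rightarrow> (nat \<Rightarrow> 'v set) \<Rightarrow> nat \<Rightarrow> 'v \<Rightarrow> 'v set" where
  "transversal E Q i v = insert v {u. \<exists>j\<in>{1,2,3}. j \<noteq> i \<and> u \<in> Q j \<and> E v u}"

definition clique_index :: "(nat \<Rightarrow> 'v set) \<Rightarrow> 'v \<Rightarrow> nat" where
  "clique_index Q u = (if u \<in> Q 1 then 1 else if u \<in> Q 2 then 2 else 3)"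

lemma clique_triple_finite: "clique_triple E Q \<Longrightarrow> i \<in> {1,2,3} \<Longrightarrow> finite (Q i)"
  unfolding clique_triple_def by (elim conjE) meson

lemma clique_triple_disjoint:
  "clique_triple E Q \<Longrightarrow> i \<in> {1,2,3} \<Longrightarrow> j \<in> {1,2,3} \<Longrightarrow> x \<in> Q i \<Longrightarrow> x \<in> Q j \<Longrightarrow> i = j"
  unfolding clique_triple_def by (elim conjE) (metis disjoint_iff)

lemma clique_triple_clique:
  "clique_triple E Q \<Longrightarrow> i \<in> {1,2,3} \<Longrightarrow> x \<in> Q i \<Longrightarrow> y \<in> Q i \<Longrightarrow> x \<noteq> y \<Longrightarrow> E x y"
  unfolding clique_triple_def by (elim conjE) meson

lemma clique_triple_unique_neighbour:
  "clique_triple E Q \<Longrightarrow> i \<in> {1,2,3} \<Longrightarrow> j \<in> {1,2,3} \<Longrightarrow> i \<noteq> j \<Longrightarrow> v \<in> Q i \<Longrightarrow>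
    b \<in> Q j \<Longrightarrow> c \<in> Q j \<Longrightarrow> E v b \<Longrightarrow> E v c \<Longrightarrow> b = c"
  unfolding clique_triple_def by (elim conjE) meson

lemma clique_triple_neighbours_adjacent:
  "clique_triple E Q \<Longrightarrow> i \<in> {1,2,3} \<Longrightarrow> j \<in> {1,2,3} \<Longrightarrow> k \<in> {1,2,3} \<Longrightarrow>
    i \<noteq> j \<Longrightarrow> j \<noteq> k \<Longrightarrow> i \<noteq> k \<Longrightarrow> v \<in> Q i \<Longrightarrow> b \<in> Q j \<Longrightarrow> c \<in> Q k \<Longrightarrow>
    E v b \<Longrightarrow> E v c \<Longrightarrow> E b c"
  unfolding clique_triple_def by (elim conjE) meson

lemma clique_index_eq:
  assumes "clique_triple E Q" "j \<in> {1,2,3}" "u \<in> Q j"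
  shows "clique_index Q u = j"
  using assms clique_triple_disjoint[OF assms(1), of _ j u] unfolding clique_index_def by fastforce

lemma clique_triple_mono:
  assumes Q: "clique_triple E Q" and sub: "\<And>j. j \<in> {1,2,3} \<Longrightarrow> Q' j \<subseteq> Q j"
  shows "clique_triple E Q'"
  unfolding clique_triple_def
proof (intro conjI ballI impI)
  fix i :: nat assume i: "i \<in> {1,2,3}"
  show "finite (Q' i)" using finite_subset[OF sub[OF i] clique_triple_finite[OF Q i]] .
next
  fix i j :: nat assume "i \<in> {1,2,3}" "j \<in> {1,2,3}" "i \<noteq> j"
  then show "Q' i \<inter> Q' j = {}" using clique_triple_disjoint[OF Q] sub by (meson disjoint_iff subsetD)
next
  fix i :: nat and x y assume "i \<in> {1,2,3}" "x \<in> Q' i" "y \<in> Q' i" "x \<noteq> y"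
  then show "E x y" using clique_triple_clique[OF Q] sub by (meson subsetD)
next
  fix i j :: nat and v b c assume "i \<in> {1,2,3}" "j \<in> {1,2,3}" "i \<noteq> j" "v \<in> Q' i" "b \<in> Q' j" "c \<in> Q' j"
    "E v b \<and> E v c"
  then show "b = c" using clique_triple_unique_neighbour[OF Q] sub by (meson subsetD)
next
  fix i j k :: nat and v b c assume "i \<in> {1,2,3}" "j \<in> {1,2,3}" "k \<in> {1,2,3}" "i \<noteq> j \<and> j \<noteq> k \<and> i \<noteq> k"
    "v \<in> Q' i" "b \<in> Q' j" "c \<in> Q' k" "E v b \<and> E v c"
  then show "E b c" using clique_triple_neighbours_adjacent[OF Q] sub by (meson subsetD)
qed

lemma mem_transversal:
  "u \<in> transversal E Q i v \<longleftrightarrow> u = v \<or> (\<exists>j\<in>{1,2,3}. j \<noteq> i \<and> u \<in> Q j \<and> E v u)"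
  by (simp add: transversal_def)

lemma transversal_meets_clique_once:
  assumes Q: "clique_triple E Q" and i: "i \<in> {1,2,3}" and v: "v \<in> Q i" and j: "j \<in> {1,2,3}"
    and x: "x \<in> transversal E Q i v \<inter> Q j" and y: "y \<in> transversal E Q i v \<inter> Q j"
  shows "x = y"
proof (cases "j = i")
  case True
  have "u = v" if u: "u \<in> transversal E Q i v" "u \<in> Q i" for u
    using u clique_triple_disjoint[OF Q _ i] unfolding mem_transversal by metis
  with x y True show ?thesis by blast
next
  case False
  have "E v u" if u: "u \<in> transversal E Q i v" "u \<in> Q j" for u
    using u clique_triple_disjoint[OF Q i j v] False unfolding mem_transversal by metis
  with x y have "E v x" "E v y" by blast+
  with False x y show ?thesis using clique_triple_unique_neighbour[OF Q i j _ v] by blast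
qed

lemma transversal_edge_within_clique:
  assumes Q: "clique_triple E Q" and sym: "\<And>x y. E x y \<Longrightarrow> E y x"
    and i: "i \<in> {1,2,3}" and v: "v \<in> Q i" and j: "j \<in> {1,2,3}" and l: "l \<in> {1,2,3}"
    and u': "u \<in> Q j - transversal E Q i v" and k': "k \<in> transversal E Q i v \<inter> Q l"
    and Euk: "E u k"
  shows "j = l"
proof (rule ccontr)
  assume jl: "j \<noteq> l"
  from u' k' have u: "u \<in> Q j" "u \<notin> transversal E Q i v"
    and k: "k \<in> transversal E Q i v" "k \<in> Q l" by blast+
  have uv: "u \<noteq> v" and not_Evu: "j \<noteq> i \<Longrightarrow> \<not> E v u"
    using u j unfolding mem_transversal by blast+
  show False
  proof (cases "k = v")
    case True
    with k v have "l = i" using clique_triple_disjoint[OF Q l i] by blast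
    with True jl show False using not_Evu sym Euk by blast
  next
    case False
    with k obtain l' where l': "l' \<in> {1,2,3}" "l' \<noteq> i" "k \<in> Q l'" "E v k"
      unfolding mem_transversal by blast
    have li: "l \<noteq> i" using clique_triple_disjoint[OF Q l l'(1) k(2) l'(3)] l'(2) by simp
    have Ekv: "E k v" and Eku: "E k u" using sym l'(4) Euk by blast+
    show False
    proof (cases "j = i")
      case True
      then show False
        using clique_triple_unique_neighbour[OF Q l i li k(2) _ v Eku Ekv] u(1) uv by blast
    next
      case ji: False
      have "E v u"
        using clique_triple_neighbours_adjacent[OF Q l i j li _ _ k(2) v u(1) Ekv Eku] ji jl by metis
      then show False using not_Evu ji by blast
    qed
  qed
qed

lemma triple_colouring_extend:
  fixes K :: "'v set" and \<kappa> col :: "'v \<Rightarrow> 'c"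
  assumes sym: "\<And>x y. E x y \<Longrightarrow> E y x" and irr: "\<And>x. \<not> E x x"
    and once: "\<And>j x y. j \<in> {1,2,3} \<Longrightarrow> x \<in> K \<inter> Q j \<Longrightarrow> y \<in> K \<inter> Q j \<Longrightarrow> x = y"
    and closed: "\<And>j l u k. j \<in> {1,2,3} \<Longrightarrow> l \<in> {1,2,3} \<Longrightarrow> u \<in> Q j - K \<Longrightarrow> k \<in> K \<inter> Q l \<Longrightarrow>
      E u k \<Longrightarrow> j = l"
    and col: "triple_colouring E (\<lambda>j. Q j - K) L' col"
    and L'_sub: "\<And>j. j \<in> {1,2,3} \<Longrightarrow> L' j \<subseteq> L j"
    and \<kappa>_mem: "\<And>j u. j \<in> {1,2,3} \<Longrightarrow> u \<in> K \<inter> Q j \<Longrightarrow> \<kappa> u \<in> L j - L' j"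
    and \<kappa>_distinct: "\<And>j l u w. j \<in> {1,2,3} \<Longrightarrow> l \<in> {1,2,3} \<Longrightarrow> j \<noteq> l \<Longrightarrow>
      u \<in> K \<inter> Q j \<Longrightarrow> w \<in> K \<inter> Q l \<Longrightarrow> \<kappa> u \<noteq> \<kappa> w"
  shows "triple_colouring E Q L (\<lambda>u. if u \<in> K then \<kappa> u else col u)"
  unfolding triple_colouring_def
proof (intro conjI ballI impI)
  have col_mem: "col u \<in> L' j" if "j \<in> {1,2,3}" "u \<in> Q j - K" for j u
    using col that unfolding triple_colouring_def by blast
  fix j :: nat and u assume j: "j \<in> {1,2,3}" and u: "u \<in> Q j"
  show "(if u \<in> K then \<kappa> u else col u) \<in> L j"
    using \<kappa>_mem[OF j] col_mem[OF j] L'_sub[OF j] u by auto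
  fix l :: nat and w assume l: "l \<in> {1,2,3}" and w: "w \<in> Q l" and Euw: "E u w"
  consider "u \<in> K" "w \<in> K" | "u \<in> K" "w \<notin> K" | "u \<notin> K" "w \<in> K" | "u \<notin> K" "w \<notin> K"
    by blast
  then show "(if u \<in> K then \<kappa> u else col u) \<noteq> (if w \<in> K then \<kappa> w else col w)"
  proof cases
    case 1
    show ?thesis
    proof (cases "j = l")
      case True
      then show ?thesis using once[OF j, of u w] 1 u w Euw irr by auto
    next
      case False
      then show ?thesis using \<kappa>_distinct[OF j l False, of u w] 1 u w by simp
    qed
  next
    case 2
    then have "l = j" using closed[OF l j, of w u] sym[OF Euw] u w by blast
    then show ?thesis using 2 \<kappa>_mem[OF j, of u] col_mem[OF j, of w] u w by auto
  next
    case 3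
    then have "j = l" using closed[OF j l, of u w] Euw u w by blast
    then show ?thesis using 3 \<kappa>_mem[OF l, of w] col_mem[OF l, of u] u w by auto
  next
    case 4
    then show ?thesis using col j l u w Euw unfolding triple_colouring_def by auto
  qed
qed

lemma
  assumes "admissible_lists Q L d" and i: "i \<in> {1,2,3}"
  shows admissible_lists_finite: "finite (L i)"
    and admissible_lists_card: "card (Q i) \<le> card (L i)"
    and admissible_lists_rep: "Q i \<noteq> {} \<Longrightarrow> d i \<in> L i"
    and admissible_lists_rep_distinct:
      "\<lbrakk>j \<in> {1,2,3}; i \<noteq> j; Q i \<noteq> {}; Q j \<noteq> {}\<rbrakk> \<Longrightarrow> d i \<noteq> d j"
  using assms unfolding admissible_lists_def by (elim conjE; meson)+

lemma admissible_lists_no_common: "admissible_lists Q L d \<Longrightarrow> L 1 \<inter> L 2 \<inter> L 3 = {}"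
  unfolding admissible_lists_def by (elim conjE)

lemma admissible_lists_other_colour:
  assumes adm: "admissible_lists Q L d" and j: "j \<in> {1,2,3}" and "finite (Q j)"
    and "x \<in> Q j" "y \<in> Q j" "x \<noteq> y"
  shows "\<exists>e\<in>L j. e \<noteq> d j"
proof -
  have "Suc (Suc 0) = card {x, y}" using \<open>x \<noteq> y\<close> by simp
  also have "\<dots> \<le> card (Q j)" using assms(3-5) by (intro card_mono) auto
  also have "\<dots> \<le> card (L j)" using admissible_lists_card[OF adm j] .
  finally have "\<not> card (L j) \<le> Suc 0" by simp
  then obtain a b where "a \<in> L j" "b \<in> L j" "a \<noteq> b"
    using card_le_Suc0_iff_eq[OF admissible_lists_finite[OF adm j]] by auto
  then show ?thesis by metis
qed

lemma card_Diff_singleton_le: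
  assumes "finite L" "c \<in> L" "card A \<le> card L" "K \<inter> A = {x}"
  shows "card (A - K) \<le> card (L - {c})"
proof -
  have "A - K = A - {x}" "x \<in> A" using assms(4) by blast+
  then show ?thesis using assms(1-3) by simp
qed

text \<open>Without the last hypothesis this fails for \<open>ea = eb = ec \<notin> {da, db, dc}\<close> with all flags set:
  then at most one of the three swaps may be made and at most one omitted.\<close>
lemma swap_choice_flat:
  assumes "Ca \<or> Pa \<longrightarrow> da \<in> La" "Cb \<or> Pb \<longrightarrow> db \<in> Lb" "Cc \<or> Pc \<longrightarrow> dc \<in> Lc"
    and "Ca \<and> Pa \<longrightarrow> ea \<in> La \<and> ea \<noteq> da" "Cb \<and> Pb \<longrightarrow> eb \<in> Lb \<and> eb \<noteq> db"
      "Cc \<and> Pc \<longrightarrow> ec \<in> Lc \<and> ec \<noteq> dc"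
    and "(Ca \<or> Pa) \<and> (Cb \<or> Pb) \<longrightarrow> da \<noteq> db" "(Ca \<or> Pa) \<and> (Cc \<or> Pc) \<longrightarrow> da \<noteq> dc"
      "(Cb \<or> Pb) \<and> (Cc \<or> Pc) \<longrightarrow> db \<noteq> dc"
    and "\<forall>x. x \<in> La \<longrightarrow> x \<in> Lb \<longrightarrow> x \<notin> Lc"
  shows "\<exists>sa sb sc. (Ca \<and> \<not> Pa \<longrightarrow> \<not> sa) \<and> (Pa \<and> \<not> Ca \<longrightarrow> sa)
    \<and> (Cb \<and> \<not> Pb \<longrightarrow> \<not> sb) \<and> (Pb \<and> \<not> Cb \<longrightarrow> sb)
    \<and> (Cc \<and> \<not> Pc \<longrightarrow> \<not> sc) \<and> (Pc \<and> \<not> Cc \<longrightarrow> sc)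
    \<and> (Ca \<and> Cb \<longrightarrow> (if sa then ea else da) \<noteq> (if sb then eb else db))
    \<and> (Ca \<and> Cc \<longrightarrow> (if sa then ea else da) \<noteq> (if sc then ec else dc))
    \<and> (Cb \<and> Cc \<longrightarrow> (if sb then eb else db) \<noteq> (if sc then ec else dc))
    \<and> (Pa \<and> Pb \<longrightarrow> (if sa then da else ea) \<noteq> (if sb then db else eb))
    \<and> (Pa \<and> Pc \<longrightarrow> (if sa then da else ea) \<noteq> (if sc then dc else ec))
    \<and> (Pb \<and> Pc \<longrightarrow> (if sb then db else eb) \<noteq> (if sc then dc else ec))"
  unfolding ex_bool_eq using assms by (smt (verit))

text \<open>\<open>C j\<close>: clique \<open>j\<close> loses a vertex, which needs a colour \<open>c j\<close>; \<open>P j\<close>: clique \<open>j\<close> keeps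
  vertices, which need a new representative \<open>p j\<close>.\<close>
lemma swap_choice:
  fixes C P :: "nat \<Rightarrow> bool" and d e :: "nat \<Rightarrow> 'c" and L :: "nat \<Rightarrow> 'c set"
  assumes d_mem: "\<forall>j\<in>{1,2,3}. C j \<or> P j \<longrightarrow> d j \<in> L j"
    and e_mem: "\<forall>j\<in>{1,2,3}. C j \<and> P j \<longrightarrow> e j \<in> L j \<and> e j \<noteq> d j"
    and d_distinct: "\<forall>j\<in>{1,2,3}. \<forall>l\<in>{1,2,3}. j \<noteq> l \<and> (C j \<or> P j) \<and> (C l \<or> P l) \<longrightarrow> d j \<noteq> d l"
    and no_common: "L 1 \<inter> L 2 \<inter> L 3 = {}"
  shows "\<exists>c p. (\<forall>j\<in>{1,2,3}. C j \<longrightarrow> c j \<in> L j)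
    \<and> (\<forall>j\<in>{1,2,3}. P j \<longrightarrow> p j \<in> L j \<and> (C j \<longrightarrow> p j \<noteq> c j))
    \<and> (\<forall>j\<in>{1,2,3}. \<forall>l\<in>{1,2,3}. j \<noteq> l \<longrightarrow>
         (C j \<and> C l \<longrightarrow> c j \<noteq> c l) \<and> (P j \<and> P l \<longrightarrow> p j \<noteq> p l))"
proof -
  have "\<exists>s1 s2 s3. (C 1 \<and> \<not> P 1 \<longrightarrow> \<not> s1) \<and> (P 1 \<and> \<not> C 1 \<longrightarrow> s1)
    \<and> (C 2 \<and> \<not> P 2 \<longrightarrow> \<not> s2) \<and> (P 2 \<and> \<not> C 2 \<longrightarrow> s2)
    \<and> (C 3 \<and> \<not> P 3 \<longrightarrow> \<not> s3) \<and> (P 3 \<and> \<not> C 3 \<longrightarrow> s3)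
    \<and> (C 1 \<and> C 2 \<longrightarrow> (if s1 then e 1 else d 1) \<noteq> (if s2 then e 2 else d 2))
    \<and> (C 1 \<and> C 3 \<longrightarrow> (if s1 then e 1 else d 1) \<noteq> (if s3 then e 3 else d 3))
    \<and> (C 2 \<and> C 3 \<longrightarrow> (if s2 then e 2 else d 2) \<noteq> (if s3 then e 3 else d 3))
    \<and> (P 1 \<and> P 2 \<longrightarrow> (if s1 then d 1 else e 1) \<noteq> (if s2 then d 2 else e 2))
    \<and> (P 1 \<and> P 3 \<longrightarrow> (if s1 then d 1 else e 1) \<noteq> (if s3 then d 3 else e 3))
    \<and> (P 2 \<and> P 3 \<longrightarrow> (if s2 then d 2 else e 2) \<noteq> (if s3 then d 3 else e 3))"
    (is "\<exists>s1 s2 s3. ?ok s1 s2 s3")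
    by (rule swap_choice_flat[where La="L 1" and Lb="L 2" and Lc="L 3"])
      (use d_mem e_mem d_distinct no_common in \<open>simp_all add: disjoint_iff\<close>)
  then obtain s1 s2 s3 where s: "?ok s1 s2 s3" by (elim exE)
  define s :: "nat \<Rightarrow> bool" where "s j = (if j = 1 then s1 else if j = 2 then s2 else s3)" for j
  have s_simps [simp]: "s 1 = s1" "s 2 = s2" "s 3 = s3" by (simp_all add: s_def)
  show ?thesis
    apply (rule exI[of _ "\<lambda>j. if s j then e j else d j"], rule exI[of _ "\<lambda>j. if s j then d j else e j"])
    using s d_mem e_mem
    apply (simp only: ball_simps insert_iff empty_iff simp_thms s_simps
        numeral_eq_iff num.distinct num.inject)
    by (smt (verit))
qed

lemma admissible_lists_remove:
  assumes adm: "admissible_lists Q L d" and fin: "\<And>j. j \<in> {1,2,3} \<Longrightarrow> finite (Q j)"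
    and once: "\<And>j x y. j \<in> {1,2,3} \<Longrightarrow> x \<in> K \<inter> Q j \<Longrightarrow> y \<in> K \<inter> Q j \<Longrightarrow> x = y"
  obtains c d' where "\<forall>j\<in>{1,2,3}. K \<inter> Q j \<noteq> {} \<longrightarrow> c j \<in> L j"
    and "\<forall>j\<in>{1,2,3}. \<forall>l\<in>{1,2,3}. j \<noteq> l \<and> K \<inter> Q j \<noteq> {} \<and> K \<inter> Q l \<noteq> {} \<longrightarrow> c j \<noteq> c l"
    and "admissible_lists (\<lambda>j. Q j - K) (\<lambda>j. if K \<inter> Q j = {} then L j else L j - {c j}) d'"
proof -
  define C where "C j \<longleftrightarrow> K \<inter> Q j \<noteq> {}" for j
  define P where "P j \<longleftrightarrow> Q j - K \<noteq> {}" for j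
  note finL = admissible_lists_finite[OF adm] and size = admissible_lists_card[OF adm]
  have d_mem: "\<forall>j\<in>{1,2,3}. C j \<or> P j \<longrightarrow> d j \<in> L j"
    using admissible_lists_rep[OF adm] unfolding C_def P_def by blast
  have d_distinct: "\<forall>j\<in>{1,2,3}. \<forall>l\<in>{1,2,3}. j \<noteq> l \<and> (C j \<or> P j) \<and> (C l \<or> P l) \<longrightarrow> d j \<noteq> d l"
    using admissible_lists_rep_distinct[OF adm] unfolding C_def P_def by blast
  note no_common = admissible_lists_no_common[OF adm]
  have "\<forall>j\<in>{1,2,3}. \<exists>e. C j \<and> P j \<longrightarrow> e \<in> L j \<and> e \<noteq> d j"
  proof
    fix j :: nat assume j: "j \<in> {1,2,3}"
    show "\<exists>e. C j \<and> P j \<longrightarrow> e \<in> L j \<and> e \<noteq> d j"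
    proof (cases "C j \<and> P j")
      case True
      then obtain x y where "x \<in> Q j" "y \<in> Q j" "x \<noteq> y" unfolding C_def P_def by blast
      then show ?thesis using admissible_lists_other_colour[OF adm j fin[OF j]] by blast
    qed blast
  qed
  then obtain e where e_mem: "\<forall>j\<in>{1,2,3}. C j \<and> P j \<longrightarrow> e j \<in> L j \<and> e j \<noteq> d j"
    by (elim bchoice[elim_format] exE)
  obtain c p where c_mem: "\<forall>j\<in>{1,2,3}. C j \<longrightarrow> c j \<in> L j"
    and p_mem: "\<forall>j\<in>{1,2,3}. P j \<longrightarrow> p j \<in> L j \<and> (C j \<longrightarrow> p j \<noteq> c j)"
    and distinct: "\<forall>j\<in>{1,2,3}. \<forall>l\<in>{1,2,3}. j \<noteq> l \<longrightarrow>
         (C j \<and> C l \<longrightarrow> c j \<noteq> c l) \<and> (P j \<and> P l \<longrightarrow> p j \<noteq> p l)"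
    using swap_choice[OF d_mem e_mem d_distinct no_common] by blast
  define L' where "L' = (\<lambda>j. if K \<inter> Q j = {} then L j else L j - {c j})"
  have adm': "admissible_lists (\<lambda>j. Q j - K) L' p"
    unfolding admissible_lists_def
  proof (intro conjI ballI impI)
    fix j :: nat assume j: "j \<in> {1,2,3}"
    show "finite (L' j)" using finL[OF j] unfolding L'_def by simp
    show "card (Q j - K) \<le> card (L' j)"
    proof (cases "C j")
      case True
      then obtain x where x: "K \<inter> Q j = {x}" using once[OF j] unfolding C_def by blast
      have "c j \<in> L j" using True c_mem j by blast
      then show ?thesis
        using card_Diff_singleton_le[OF finL[OF j] _ size[OF j] x] True unfolding L'_def C_def by simp
    next
      case False
      then show ?thesis using size[OF j] unfolding L'_def C_def by (simp add: Diff_triv inf_commute)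
    qed
    assume "Q j - K \<noteq> {}"
    then show "p j \<in> L' j" using p_mem j unfolding L'_def P_def C_def by auto
  next
    fix j l :: nat assume "j \<in> {1,2,3}" "l \<in> {1,2,3}" "j \<noteq> l \<and> Q j - K \<noteq> {} \<and> Q l - K \<noteq> {}"
    then show "p j \<noteq> p l" using distinct unfolding P_def by blast
  next
    show "L' 1 \<inter> L' 2 \<inter> L' 3 = {}" using no_common unfolding L'_def by auto
  qed
  have c_distinct: "\<forall>j\<in>{1,2,3}. \<forall>l\<in>{1,2,3}. j \<noteq> l \<and> C j \<and> C l \<longrightarrow> c j \<noteq> c l"
    using distinct by blast
  show ?thesis
    using that[OF c_mem[unfolded C_def] c_distinct[unfolded C_def] adm'[unfolded L'_def]] .
qed

lemma clique_triple_list_colourable: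
  assumes sym: "\<And>x y. E x y \<Longrightarrow> E y x" and irr: "\<And>x. \<not> E x x"
    and "clique_triple E Q" and "admissible_lists Q L d"
  shows "\<exists>col. triple_colouring E Q L col"
  using assms(3,4)
proof (induction "card (Q 1 \<union> Q 2 \<union> Q 3)" arbitrary: Q L d rule: less_induct)
  case less
  note Q = less.prems(1) and adm = less.prems(2)
  show ?case
  proof (cases "Q 1 \<union> Q 2 \<union> Q 3 = {}")
    case True
    then show ?thesis unfolding triple_colouring_def by auto
  next
    case False
    then obtain i v where i: "i \<in> {1,2,3}" and v: "v \<in> Q i" by blast
    define K where "K = transversal E Q i v"
    have once: "\<And>j x y. j \<in> {1,2,3} \<Longrightarrow> x \<in> K \<inter> Q j \<Longrightarrow> y \<in> K \<inter> Q j \<Longrightarrow> x = y"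
      using transversal_meets_clique_once[OF Q i v] unfolding K_def .
    have closed: "\<And>j l u k. j \<in> {1,2,3} \<Longrightarrow> l \<in> {1,2,3} \<Longrightarrow> u \<in> Q j - K \<Longrightarrow> k \<in> K \<inter> Q l \<Longrightarrow>
        E u k \<Longrightarrow> j = l"
      using transversal_edge_within_clique[OF Q sym i v] unfolding K_def .
    obtain c d' where c_mem: "\<forall>j\<in>{1,2,3}. K \<inter> Q j \<noteq> {} \<longrightarrow> c j \<in> L j"
      and c_distinct: "\<forall>j\<in>{1,2,3}. \<forall>l\<in>{1,2,3}. j \<noteq> l \<and> K \<inter> Q j \<noteq> {} \<and> K \<inter> Q l \<noteq> {} \<longrightarrow> c j \<noteq> c l"
      and adm': "admissible_lists (\<lambda>j. Q j - K) (\<lambda>j. if K \<inter> Q j = {} then L j else L j - {c j}) d'"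
      by (rule admissible_lists_remove[OF adm clique_triple_finite[OF Q] once])
    have "v \<in> K" unfolding K_def transversal_def by simp
    then have "card ((Q 1 - K) \<union> (Q 2 - K) \<union> (Q 3 - K)) < card (Q 1 \<union> Q 2 \<union> Q 3)"
      using i v clique_triple_finite[OF Q] by (intro psubset_card_mono) auto
    then obtain col where col: "triple_colouring E (\<lambda>j. Q j - K)
        (\<lambda>j. if K \<inter> Q j = {} then L j else L j - {c j}) col"
      using less.hyps[OF _ clique_triple_mono[OF Q] adm'] by blast
    have "triple_colouring E Q L (\<lambda>u. if u \<in> K then c (clique_index Q u) else col u)"
    proof (rule triple_colouring_extend[OF sym irr once closed col])
      fix j u assume j: "j \<in> {1,2,3}" and u: "u \<in> K \<inter> Q j"
      then have "clique_index Q u = j" "c j \<in> L j" using clique_index_eq[OF Q] c_mem by blast+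
      with u show "c (clique_index Q u) \<in> L j - (if K \<inter> Q j = {} then L j else L j - {c j})" by auto
    next
      fix j l u w assume "j \<in> {1,2,3}" "l \<in> {1,2,3}" "j \<noteq> l" "u \<in> K \<inter> Q j" "w \<in> K \<inter> Q l"
      then have "clique_index Q u = j" "clique_index Q w = l" "c j \<noteq> c l"
        using clique_index_eq[OF Q] c_distinct by blast+
      then show "c (clique_index Q u) \<noteq> c (clique_index Q w)" by simp
    qed auto
    then show ?thesis by blast
  qed
qed

theorem mainTheorem3:
  fixes V :: "'v set" and E :: "'v \<Rightarrow> 'v \<Rightarrow> bool"
    and Q :: "nat \<Rightarrow> 'v set" and L :: "nat \<Rightarrow> 'c set" and Lst :: "'v \<Rightarrow> 'c set"
    and d :: "nat \<Rightarrow> 'c"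
  assumes graph: "simple_graph V E"
    and cover: "V = Q 1 \<union> Q 2 \<union> Q 3"
    and disj: "\<forall>i\<in>{1,2,3}. \<forall>j\<in>{1,2,3}. i \<noteq> j \<longrightarrow> Q i \<inter> Q j = {}"
    and cliques: "\<forall>i\<in>{1,2,3}. is_clique V E (Q i)"
    and a: "\<forall>i\<in>{1,2,3}. \<forall>j\<in>{1,2,3}. i \<noteq> j \<longrightarrow>
              (\<forall>v\<in>Q i. \<forall>b\<in>Q j. \<forall>c\<in>Q j. E v b \<and> E v c \<longrightarrow> b = c)"
    and b: "\<forall>i\<in>{1,2,3}. \<forall>j\<in>{1,2,3}. \<forall>k\<in>{1,2,3}. i \<noteq> j \<and> j \<noteq> k \<and> i \<noteq> k \<longrightarrow>
              (\<forall>v\<in>Q i. \<forall>b\<in>Q j. \<forall>c\<in>Q k. E v b \<and> E v c \<longrightarrow> E b c)"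
    and lists: "\<forall>i\<in>{1,2,3}. \<forall>v\<in>Q i. Lst v = L i"
    and fin: "\<forall>i\<in>{1,2,3}. finite (L i)"
    and size: "\<forall>i\<in>{1,2,3}. card (Q i) \<le> card (L i)"
    and dmem: "\<forall>i\<in>{1,2,3}. d i \<in> L i"
    and ddist: "d 1 \<noteq> d 2 \<and> d 1 \<noteq> d 3 \<and> d 2 \<noteq> d 3"
    and nocommon: "L 1 \<inter> L 2 \<inter> L 3 = {}"
  shows "\<exists>col. is_L_colouring V E Lst col"
proof -
  have finV: "finite V" and sym: "\<And>x y. E x y \<Longrightarrow> E y x" and irr: "\<And>x. \<not> E x x"
    using graph unfolding simple_graph_def by blast+
  have "\<forall>i\<in>{1,2,3}. finite (Q i)" using finV cover by simp
  moreover have "\<forall>i\<in>{1,2,3}. \<forall>x\<in>Q i. \<forall>y\<in>Q i. x \<noteq> y \<longrightarrow> E x y"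
    using cliques unfolding is_clique_def by blast
  ultimately have Q: "clique_triple E Q" using disj a b unfolding clique_triple_def by (intro conjI)
  have adm: "admissible_lists Q L d"
    using fin size dmem ddist nocommon unfolding admissible_lists_def by auto
  obtain col where "triple_colouring E Q L col"
    using clique_triple_list_colourable[OF sym irr Q adm] by blast
  then have "is_L_colouring V E Lst col"
    using cover lists unfolding triple_colouring_def is_L_colouring_def by blast
  then show ?thesis by blast
qed

end
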